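(* Let $\mathcal{C}$ be a deflation-exact category and let $\mathcal{A}\subseteq\mathcal{C}$ be an admissibly deflation-percolating subcategory. If $\mathcal{B}\subseteq\mathcal{A}$ is a Serre subcategory of $\mathcal{A}$, then $\mathcal{B}\subseteq\mathcal{C}$ is an admissibly deflation-percolating subcategory.
   Context: A conflation category is an additive category with a class of kernel-cokernel pairs (closed under isomorphisms) called conflations; first map an inflation, second a deflation. A deflation-exact category is a conflation category satisfying: (R0) $1_0$ is a deflation; (R1) composites of deflations are deflations; (R2) pullbacks of deflations along arbitrary morphisms exist and are deflations. A non-empty full subcategory $\mathcal{A}$ is admissibly deflation-percolating if: (A1) for every conflation $A'\rightarrowtail A\twoheadrightarrow A''$ in $\mathcal{C}$, $A\in\mathcal{A}$ iff $A',A''\in\mathcal{A}$; (A2) every morphism $C\to A$ with $A\in\mathcal{A}$ factors as a deflation $C\twoheadrightarrow A'$ followed by an inflation $A'\rightarrowtail A$ with $A'\in\mathcal{A}$; (A3) if $a\colon C\rightarrowtail D$ is an inflation and $b\colon C\twoheadrightarrow A$ a deflation with $A\in\mathcal{A}$, the pushout of $a$ along $b$ exists and yields a deflation $D\twoheadrightarrow P$ and an inflation $A\rightarrowtail P$. For such $\mathcal{A}$, the category $\mathcal{A}$ is abelian (with short exact sequences being the conflations of $\mathcal{C}$ lying in $\mathcal{A}$). A Serre subcategory $\mathcal{B}$ of $\mathcal{A}$ is a non-empty full subcategory such that for every short exact sequence $0\to B'\to B\to B''\to 0$ in $\mathcal{A}$, $B\in\mathcal{B}$ iff $B',B''\in\mathcal{B}$.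 *)

theory Defs
  imports Main
begin

text \<open>A (small) category with objects of type 'o and morphisms of type 'm,
  together with the data of an additive structure on hom-sets.
  Comp g f is the composite "g after f".\<close>

record ('o, 'm) precat =
  Obj  :: "'o set"
  Mor  :: "'m set"
  Dom  :: "'m \<Rightarrow> 'o"
  Cod  :: "'m \<Rightarrow> 'o"
  Comp :: "'m \<Rightarrow> 'm \<Rightarrow> 'm"
  Id   :: "'o \<Rightarrow> 'm"
  Add  :: "'m \<Rightarrow> 'm \<Rightarrow> 'm"
  Zmor :: "'o \<Rightarrow> 'o \<Rightarrow> 'm"

definition hom :: "('o, 'm) precat \<Rightarrow> 'o \<Rightarrow> 'o \<Rightarrow> 'm set" where
  "hom C X Y = {f \<in> Mor C. Dom C f = X \<and> Cod C f = Y}"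

definition category :: "('o, 'm) precat \<Rightarrow> bool" where
  "category C \<longleftrightarrow>
     (\<forall>f\<in>Mor C. Dom C f \<in> Obj C \<and> Cod C f \<in> Obj C)
   \<and> (\<forall>X\<in>Obj C. Id C X \<in> hom C X X)
   \<and> (\<forall>f\<in>Mor C. \<forall>g\<in>Mor C. Cod C f = Dom C g \<longrightarrow> Comp C g f \<in> hom C (Dom C f) (Cod C g))
   \<and> (\<forall>f\<in>Mor C. \<forall>g\<in>Mor C. \<forall>h\<in>Mor C. Cod C f = Dom C g \<longrightarrow> Cod C g = Dom C h \<longrightarrow>
        Comp C h (Comp C g f) = Comp C (Comp C h g) f)
   \<and> (\<forall>f\<in>Mor C. Comp C (Id C (Cod C f)) f = f \<and> Comp C f (Id C (Dom C f)) = f)"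

definition preadditive :: "('o, 'm) precat \<Rightarrow> bool" where
  "preadditive C \<longleftrightarrow> category C \<and>
     (\<forall>X\<in>Obj C. \<forall>Y\<in>Obj C.
        Zmor C X Y \<in> hom C X Y
      \<and> (\<forall>f\<in>hom C X Y. \<forall>g\<in>hom C X Y. Add C f g \<in> hom C X Y)
      \<and> (\<forall>f\<in>hom C X Y. \<forall>g\<in>hom C X Y. \<forall>h\<in>hom C X Y. Add C (Add C f g) h = Add C f (Add C g h))
      \<and> (\<forall>f\<in>hom C X Y. \<forall>g\<in>hom C X Y. Add C f g = Add C g f)
      \<and> (\<forall>f\<in>hom C X Y. Add C f (Zmor C X Y) = f)
      \<and> (\<forall>f\<in>hom C X Y. \<exists>g\<in>hom C X Y. Add C f g = Zmor C X Y))
   \<and> (\<forall>X\<in>Obj C. \<forall>Y\<in>Obj C. \<forall>Z\<in>Obj C. \<forall>f\<in>hom C X Y. \<forall>f'\<in>hom C X Y. \<forall>g\<in>hom C Y Z. \<forall>g'\<in>hom C Y Z.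
        Comp C g (Add C f f') = Add C (Comp C g f) (Comp C g f')
      \<and> Comp C (Add C g g') f = Add C (Comp C g f) (Comp C g' f))"

definition is_zero_obj :: "('o, 'm) precat \<Rightarrow> 'o \<Rightarrow> bool" where
  "is_zero_obj C Z \<longleftrightarrow> Z \<in> Obj C \<and>
     (\<forall>X\<in>Obj C. (\<exists>!f. f \<in> hom C Z X) \<and> (\<exists>!f. f \<in> hom C X Z))"

definition is_biproduct ::
  "('o, 'm) precat \<Rightarrow> 'o \<Rightarrow> 'o \<Rightarrow> 'o \<Rightarrow> 'm \<Rightarrow> 'm \<Rightarrow> 'm \<Rightarrow> 'm \<Rightarrow> bool" where
  "is_biproduct C X Y P i1 i2 p1 p2 \<longleftrightarrow> P \<in> Obj C
     \<and> i1 \<in> hom C X P \<and> i2 \<in> hom C Y P \<and> p1 \<in> hom C P X \<and> p2 \<in> hom C P Y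
     \<and> Comp C p1 i1 = Id C X \<and> Comp C p2 i2 = Id C Y
     \<and> Comp C p1 i2 = Zmor C Y X \<and> Comp C p2 i1 = Zmor C X Y
     \<and> Add C (Comp C i1 p1) (Comp C i2 p2) = Id C P"

definition additive :: "('o, 'm) precat \<Rightarrow> bool" where
  "additive C \<longleftrightarrow> preadditive C \<and> (\<exists>Z. is_zero_obj C Z)
     \<and> (\<forall>X\<in>Obj C. \<forall>Y\<in>Obj C. \<exists>P i1 i2 p1 p2. is_biproduct C X Y P i1 i2 p1 p2)"

definition iso :: "('o, 'm) precat \<Rightarrow> 'm \<Rightarrow> bool" where
  "iso C a \<longleftrightarrow> a \<in> Mor C \<and> (\<exists>b\<in>hom C (Cod C a) (Dom C a).
      Comp C b a = Id C (Dom C a) \<and> Comp C a b = Id C (Cod C a))"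

definition is_kernel :: "('o, 'm) precat \<Rightarrow> 'm \<Rightarrow> 'm \<Rightarrow> bool" where
  "is_kernel C k f \<longleftrightarrow> k \<in> Mor C \<and> f \<in> Mor C \<and> Cod C k = Dom C f
     \<and> Comp C f k = Zmor C (Dom C k) (Cod C f)
     \<and> (\<forall>h\<in>Mor C. Cod C h = Dom C f \<longrightarrow> Comp C f h = Zmor C (Dom C h) (Cod C f) \<longrightarrow>
          (\<exists>!u. u \<in> hom C (Dom C h) (Dom C k) \<and> Comp C k u = h))"

definition is_cokernel :: "('o, 'm) precat \<Rightarrow> 'm \<Rightarrow> 'm \<Rightarrow> bool" where
  "is_cokernel C c f \<longleftrightarrow> c \<in> Mor C \<and> f \<in> Mor C \<and> Dom C c = Cod C f
     \<and> Comp C c f = Zmor C (Dom C f) (Cod C c)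
     \<and> (\<forall>h\<in>Mor C. Dom C h = Cod C f \<longrightarrow> Comp C h f = Zmor C (Dom C f) (Cod C h) \<longrightarrow>
          (\<exists>!u. u \<in> hom C (Cod C c) (Cod C h) \<and> Comp C u c = h))"

definition kernel_cokernel_pair :: "('o, 'm) precat \<Rightarrow> 'm \<Rightarrow> 'm \<Rightarrow> bool" where
  "kernel_cokernel_pair C f g \<longleftrightarrow> is_kernel C f g \<and> is_cokernel C g f"

text \<open>Pullback square: p' : P \<rightarrow> Dom f and f' : P \<rightarrow> Dom p with p f' = f p'
  (p' is the pullback of p along f).\<close>

definition is_pullback :: "('o, 'm) precat \<Rightarrow> 'm \<Rightarrow> 'm \<Rightarrow> 'm \<Rightarrow> 'm \<Rightarrow> bool" where
  "is_pullback C p f p' f' \<longleftrightarrow> p \<in> Mor C \<and> f \<in> Mor C \<and> p' \<in> Mor C \<and> f' \<in> Mor C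
     \<and> Cod C p = Cod C f \<and> Dom C p' = Dom C f' \<and> Cod C p' = Dom C f \<and> Cod C f' = Dom C p
     \<and> Comp C p f' = Comp C f p'
     \<and> (\<forall>x\<in>Mor C. \<forall>y\<in>Mor C. Dom C x = Dom C y \<longrightarrow> Cod C x = Dom C f \<longrightarrow> Cod C y = Dom C p \<longrightarrow>
          Comp C f x = Comp C p y \<longrightarrow>
          (\<exists>!u. u \<in> hom C (Dom C x) (Dom C p') \<and> Comp C p' u = x \<and> Comp C f' u = y))"

text \<open>Pushout square: for a : X \<rightarrow> D and b : X \<rightarrow> A, a' : A \<rightarrow> P and b' : D \<rightarrow> P with
  a' b = b' a (a' is the pushout of a along b, b' the pushout of b along a).\<close>

definition is_pushout :: "('o, 'm) precat \<Rightarrow> 'm \<Rightarrow> 'm \<Rightarrow> 'm \<Rightarrow> 'm \<Rightarrow> bool" where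
  "is_pushout C a b a' b' \<longleftrightarrow> a \<in> Mor C \<and> b \<in> Mor C \<and> a' \<in> Mor C \<and> b' \<in> Mor C
     \<and> Dom C a = Dom C b \<and> Cod C a' = Cod C b' \<and> Dom C a' = Cod C b \<and> Dom C b' = Cod C a
     \<and> Comp C a' b = Comp C b' a
     \<and> (\<forall>x\<in>Mor C. \<forall>y\<in>Mor C. Cod C x = Cod C y \<longrightarrow> Dom C x = Cod C b \<longrightarrow> Dom C y = Cod C a \<longrightarrow>
          Comp C x b = Comp C y a \<longrightarrow>
          (\<exists>!u. u \<in> hom C (Cod C a') (Cod C x) \<and> Comp C u a' = x \<and> Comp C u b' = y))"

definition conflation_category :: "('o, 'm) precat \<Rightarrow> ('m \<times> 'm) set \<Rightarrow> bool" where
  "conflation_category C E \<longleftrightarrow> additive C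
     \<and> (\<forall>(f, g)\<in>E. kernel_cokernel_pair C f g)
     \<and> (\<forall>(f, g)\<in>E. \<forall>f' g' a b c.
          iso C a \<and> iso C b \<and> iso C c
          \<and> a \<in> hom C (Dom C f) (Dom C f') \<and> b \<in> hom C (Cod C f) (Cod C f')
          \<and> c \<in> hom C (Cod C g) (Cod C g')
          \<and> f' \<in> Mor C \<and> g' \<in> Mor C \<and> Dom C g' = Cod C f'
          \<and> Comp C b f = Comp C f' a \<and> Comp C c g = Comp C g' b
          \<longrightarrow> (f', g') \<in> E)"

definition inflation :: "('o, 'm) precat \<Rightarrow> ('m \<times> 'm) set \<Rightarrow> 'm \<Rightarrow> bool" where
  "inflation C E f \<longleftrightarrow> (\<exists>g. (f, g) \<in> E)"

definition deflation :: "('o, 'm) precat \<Rightarrow> ('m \<times> 'm) set \<Rightarrow> 'm \<Rightarrow> bool" where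
  "deflation C E g \<longleftrightarrow> (\<exists>f. (f, g) \<in> E)"

definition deflation_exact :: "('o, 'm) precat \<Rightarrow> ('m \<times> 'm) set \<Rightarrow> bool" where
  "deflation_exact C E \<longleftrightarrow> conflation_category C E
     \<and> (\<exists>Z. is_zero_obj C Z \<and> deflation C E (Id C Z))
     \<and> (\<forall>p q. deflation C E p \<longrightarrow> deflation C E q \<longrightarrow> Cod C p = Dom C q \<longrightarrow>
          deflation C E (Comp C q p))
     \<and> (\<forall>p f. deflation C E p \<longrightarrow> f \<in> Mor C \<longrightarrow> Cod C f = Cod C p \<longrightarrow>
          (\<exists>p' f'. is_pullback C p f p' f' \<and> deflation C E p'))"

text \<open>Full subcategories are given by their sets of objects.\<close>

definition adm_defl_percolating :: "('o, 'm) precat \<Rightarrow> ('m \<times> 'm) set \<Rightarrow> 'o set \<Rightarrow> bool" where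
  "adm_defl_percolating C E A \<longleftrightarrow> A \<subseteq> Obj C \<and> A \<noteq> {}
     \<and> (\<forall>(f, g)\<in>E. Cod C f \<in> A \<longleftrightarrow> (Dom C f \<in> A \<and> Cod C g \<in> A))
     \<and> (\<forall>f\<in>Mor C. Cod C f \<in> A \<longrightarrow>
          (\<exists>d i. deflation C E d \<and> inflation C E i \<and> Cod C d \<in> A
               \<and> Dom C d = Dom C f \<and> Dom C i = Cod C d \<and> Cod C i = Cod C f
               \<and> f = Comp C i d))
     \<and> (\<forall>a b. inflation C E a \<longrightarrow> deflation C E b \<longrightarrow> Dom C a = Dom C b \<longrightarrow> Cod C b \<in> A \<longrightarrow>
          (\<exists>a' b'. is_pushout C a b a' b' \<and> deflation C E b' \<and> inflation C E a'))"

text \<open>Serre subcategory of the abelian category A, whose short exact sequences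
  are exactly the conflations of C with all three terms in A.\<close>

definition serre_subcategory :: "('o, 'm) precat \<Rightarrow> ('m \<times> 'm) set \<Rightarrow> 'o set \<Rightarrow> 'o set \<Rightarrow> bool" where
  "serre_subcategory C E A B \<longleftrightarrow> B \<subseteq> A \<and> B \<noteq> {}
     \<and> (\<forall>(f, g)\<in>E. Dom C f \<in> A \<longrightarrow> Cod C f \<in> A \<longrightarrow> Cod C g \<in> A \<longrightarrow>
          (Cod C f \<in> B \<longleftrightarrow> (Dom C f \<in> B \<and> Cod C g \<in> B)))"

end

theory Submission
  imports Defs
begin

text \<open>A conflation of C whose middle term lies in B
  has all its terms in A by (A1) for A, so it is a short exact sequence of A and the Serre
  property applies. The image in the (A2)-factorization of a morphism into an object of B
  is the domain of an inflation into that object, hence lies in B. Axiom (A3) only asks the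
  deflation to end in the subcategory, so it is inherited by any subset.\<close>

lemma adm_defl_percolating_conflation_iff:
  assumes "adm_defl_percolating C E A" and "(f, g) \<in> E"
  shows "Cod C f \<in> A \<longleftrightarrow> Dom C f \<in> A \<and> Cod C g \<in> A"
  using assms unfolding adm_defl_percolating_def by auto

lemma adm_defl_percolating_factorization:
  assumes "adm_defl_percolating C E A" and "f \<in> Mor C" and "Cod C f \<in> A"
  obtains d i where "deflation C E d" "inflation C E i" "Cod C d \<in> A"
    "Dom C d = Dom C f" "Dom C i = Cod C d" "Cod C i = Cod C f" "f = Comp C i d"
  using assms unfolding adm_defl_percolating_def by blast

lemma adm_defl_percolating_pushout:
  assumes "adm_defl_percolating C E A" and "inflation C E a" and "deflation C E b"
    and "Dom C a = Dom C b" and "Cod C b \<in> A"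
  shows "\<exists>a' b'. is_pushout C a b a' b' \<and> deflation C E b' \<and> inflation C E a'"
  using assms unfolding adm_defl_percolating_def by blast

lemma serre_subcategory_conflation_iff:
  assumes A: "adm_defl_percolating C E A" and B: "serre_subcategory C E A B"
    and fg: "(f, g) \<in> E"
  shows "Cod C f \<in> B \<longleftrightarrow> Dom C f \<in> B \<and> Cod C g \<in> B"
proof -
  have "B \<subseteq> A" and serre: "Dom C f \<in> A \<Longrightarrow> Cod C f \<in> A \<Longrightarrow> Cod C g \<in> A \<Longrightarrow>
      Cod C f \<in> B \<longleftrightarrow> Dom C f \<in> B \<and> Cod C g \<in> B"
    using B fg unfolding serre_subcategory_def by auto
  moreover have "Cod C f \<in> A \<longleftrightarrow> Dom C f \<in> A \<and> Cod C g \<in> A"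
    using adm_defl_percolating_conflation_iff[OF A fg] .
  ultimately show ?thesis by blast
qed

lemma serre_subcategory_inflation_dom:
  assumes "adm_defl_percolating C E A" and "serre_subcategory C E A B"
    and "inflation C E i" and "Cod C i \<in> B"
  shows "Dom C i \<in> B"
proof -
  obtain g where "(i, g) \<in> E"
    using assms(3) unfolding inflation_def by blast
  then show ?thesis
    using serre_subcategory_conflation_iff[OF assms(1,2)] assms(4) by blast
qed

lemma serre_subcategory_factorization:
  assumes A: "adm_defl_percolating C E A" and B: "serre_subcategory C E A B"
    and "f \<in> Mor C" and "Cod C f \<in> B"
  shows "\<exists>d i. deflation C E d \<and> inflation C E i \<and> Cod C d \<in> B
    \<and> Dom C d = Dom C f \<and> Dom C i = Cod C d \<and> Cod C i = Cod C f \<and> f = Comp C i d"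
proof -
  have "Cod C f \<in> A"
    using B \<open>Cod C f \<in> B\<close> unfolding serre_subcategory_def by blast
  then obtain d i where di: "deflation C E d" "inflation C E i"
    "Dom C d = Dom C f" "Dom C i = Cod C d" "Cod C i = Cod C f" "f = Comp C i d"
    using adm_defl_percolating_factorization[OF A \<open>f \<in> Mor C\<close>] by metis
  moreover have "Cod C d \<in> B"
    using serre_subcategory_inflation_dom[OF A B \<open>inflation C E i\<close>] di \<open>Cod C f \<in> B\<close>
    by simp
  ultimately show ?thesis by blast
qed

theorem mainTheorem4:
  fixes C :: "('o, 'm) precat" and E :: "('m \<times> 'm) set" and A B :: "'o set"
  assumes "deflation_exact C E"
    and "adm_defl_percolating C E A"
    and "serre_subcategory C E A B"
  shows "adm_defl_percolating C E B"
proof -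
  have "B \<subseteq> A" "B \<noteq> {}" and "A \<subseteq> Obj C"
    using assms(2,3) unfolding serre_subcategory_def adm_defl_percolating_def by auto
  moreover have "\<forall>(f, g)\<in>E. Cod C f \<in> B \<longleftrightarrow> (Dom C f \<in> B \<and> Cod C g \<in> B)"
    using serre_subcategory_conflation_iff[OF assms(2,3)] by blast
  moreover have "\<forall>f\<in>Mor C. Cod C f \<in> B \<longrightarrow>
      (\<exists>d i. deflation C E d \<and> inflation C E i \<and> Cod C d \<in> B
        \<and> Dom C d = Dom C f \<and> Dom C i = Cod C d \<and> Cod C i = Cod C f \<and> f = Comp C i d)"
    using serre_subcategory_factorization[OF assms(2,3)] by blast
  moreover have "\<forall>a b. inflation C E a \<longrightarrow> deflation C E b \<longrightarrow> Dom C a = Dom C b \<longrightarrow>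
      Cod C b \<in> B \<longrightarrow> (\<exists>a' b'. is_pushout C a b a' b' \<and> deflation C E b' \<and> inflation C E a')"
    using adm_defl_percolating_pushout[OF assms(2)] \<open>B \<subseteq> A\<close> by blast
  ultimately show ?thesis
    unfolding adm_defl_percolating_def by (intro conjI) blast+
qed

end
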